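(* There is an absolute constant $C>0$ such that for every integer $N\ge2$, every Hilbert space $\mathcal{H}$ of dimension $N$ with orthonormal basis $e_0,\dots,e_{N-1}$, every $K\in\mathcal{D}(\mathbb{T})$ and every $e\in\mathcal{H}$, \[ \sum_{I\in\mathcal{D}(K)}|\langle\omega_I,e\rangle_{\mathcal{H}}|^2\,|I|\le C|K|\,\|e\|_{\mathcal{H}}^2 , \] where the vectors $\omega_I$ are defined as follows.
   Context: $\mathbb{T}$ is identified with $[0,1)$ via $x\mapsto e^{2\pi ix}$; $\mathcal{D}(\mathbb{T})$ is the set of dyadic intervals $[2^{-j}k,2^{-j}(k+1))\subset[0,1)$, $j\ge0$, and $\mathcal{D}(K)$ the dyadic subintervals of $K$. For such $I$, $|I|$ is its length, $C_I$ its center, and $\mathrm{rk}(I)=-\log_2|I|$. Let $a_m=\frac{1}{m(\log N)^{1/2}}$ for $1\le m\le N$. For $I\in\mathcal{D}(\mathbb{T})$ with $\mathrm{rk}(I)=j\in[1,N]$, set $\omega_I=\sum_{l=0}^{j-1}a_{j-l}\,e^{2\pi i2^lC_I}e_l$; for other ranks $\omega_I=0$. *)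

theory Defs
  imports "HOL-Analysis.Analysis"
begin

text \<open>A dyadic interval [2^-j k, 2^-j (k+1)) in [0,1) is encoded by the pair (j,k) with k < 2^j.\<close>

definition dyadic :: "nat \<times> nat \<Rightarrow> bool" where
  "dyadic I \<longleftrightarrow> snd I < 2 ^ fst I"

definition dlen :: "nat \<times> nat \<Rightarrow> real" where
  "dlen I = (1/2) ^ fst I"

definition dcenter :: "nat \<times> nat \<Rightarrow> real" where
  "dcenter I = (real (snd I) + 1/2) / 2 ^ fst I"

definition dyadic_sub :: "nat \<times> nat \<Rightarrow> (nat \<times> nat) set" where
  "dyadic_sub K = {I. dyadic I \<and> fst K \<le> fst I \<and> snd I div 2 ^ (fst I - fst K) = snd K}"

definition acoef :: "nat \<Rightarrow> nat \<Rightarrow> real" where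
  "acoef N m = 1 / (real m * sqrt (ln (real N)))"

text \<open>Coordinates of omega_I w.r.t. the orthonormal basis e_0,...,e_{N-1}.\<close>
definition omega :: "nat \<Rightarrow> nat \<times> nat \<Rightarrow> nat \<Rightarrow> complex" where
  "omega N I l = (if 1 \<le> fst I \<and> fst I \<le> N \<and> l < fst I
     then complex_of_real (acoef N (fst I - l)) *
          exp (2 * complex_of_real pi * \<i> * complex_of_real (2 ^ l * dcenter I))
     else 0)"

definition hinner :: "nat \<Rightarrow> (nat \<Rightarrow> complex) \<Rightarrow> (nat \<Rightarrow> complex) \<Rightarrow> complex" where
  "hinner N x y = (\<Sum>l<N. x l * cnj (y l))"

definition hnorm2 :: "nat \<Rightarrow> (nat \<Rightarrow> complex) \<Rightarrow> real" where
  "hnorm2 N x = (\<Sum>l<N. (cmod (x l))^2)"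

end

theory Submission
  imports Defs
begin

(* Write k = rk K, e(x) = exp(2 pi i x), and split <omega_I, e> for I in D(K) of rank j into the
   coordinates l < k and l >= k.  As I runs over the 2^(j-k) subintervals of K of rank j, the
   phase e(2^l C_I) with l >= k is a fixed phase times the r-th power of e(2^(l-k) / 2^(j-k)),
   and these are distinct 2^(j-k)-th roots of unity for distinct l.  So the fine coordinates
   l >= k are orthogonal in the sum over I and contribute |K| sum_{k<=l<j} a_{j-l}^2 |e_l|^2,
   while the coarse coordinates l < k are bounded by Cauchy-Schwarz, contributing at most
   |K| (sum_{l<k} a_{j-l}^2) ||e||^2.  Summing over j <= N, the factors sum_m 1/m^2 <= 2 and
   H_N <= 1 + ln N are absorbed by the normalisation a_m^2 = 1 / (m^2 ln N). *)

abbreviation e2pi :: "real \<Rightarrow> complex" where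
  "e2pi x \<equiv> exp (2 * complex_of_real pi * \<i> * complex_of_real x)"

lemma e2pi_add: "e2pi (x + y) = e2pi x * e2pi y"
  by (simp add: distrib_left exp_add)

lemma e2pi_mult_cnj: "e2pi x * cnj (e2pi y) = e2pi (x - y)"
  by (simp add: exp_cnj exp_diff right_diff_distrib divide_inverse exp_minus)

lemma e2pi_of_nat_mult: "e2pi (real n * x) = e2pi x ^ n"
  by (simp add: exp_of_nat_mult[symmetric] mult_ac)

lemma e2pi_eq_1_iff: "e2pi x = 1 \<longleftrightarrow> x \<in> \<int>"
  by (auto simp: exp_eq_1 Ints_def)

lemma sum_e2pi_powers_eq_0:
  fixes d :: int and M :: nat
  assumes "d \<noteq> 0" "\<bar>d\<bar> < int M"
  shows "(\<Sum>r<M. e2pi (d / M) ^ r) = 0"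
proof -
  have "real M * (d / M) = d"
    using assms by simp
  then have "e2pi (d / M) ^ M = 1"
    by (metis e2pi_of_nat_mult e2pi_eq_1_iff Ints_of_int)
  moreover have "e2pi (d / M) \<noteq> 1"
  proof
    assume "e2pi (d / M) = 1"
    then have "d / M \<in> \<int>"
      by (simp only: e2pi_eq_1_iff)
    then obtain n :: int where "d / M = n"
      by (elim Ints_cases)
    then have "d = n * int M"
      using assms by (simp add: field_simps) (metis of_int_eq_iff of_int_mult of_int_of_nat_eq)
    with assms show False
      by (cases "n = 0") (auto simp: abs_mult dest: mult_left_le[of "int M"])
  qed
  ultimately show ?thesis
    using geometric_sum[of "e2pi (d / M)" M] by simp
qed

lemma sum_cmod_sq_orthogonal_powers:
  fixes c \<theta> :: "'a \<Rightarrow> complex"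
  assumes "finite L" and unimodular: "\<And>l. l \<in> L \<Longrightarrow> cmod (\<theta> l) = 1"
    and orthogonal: "\<And>l l'. l \<in> L \<Longrightarrow> l' \<in> L \<Longrightarrow> l \<noteq> l' \<Longrightarrow>
                       (\<Sum>r<M. (\<theta> l * cnj (\<theta> l'))^r) = 0"
  shows "(\<Sum>r<M. (cmod (\<Sum>l\<in>L. c l * \<theta> l ^ r))^2) = M * (\<Sum>l\<in>L. (cmod (c l))^2)"
proof -
  have diagonal:
      "(\<Sum>l'\<in>L. c l * cnj (c l') * (\<Sum>r<M. (\<theta> l * cnj (\<theta> l'))^r)) = M * (c l * cnj (c l))"
    if "l \<in> L" for l
  proof -
    have "\<theta> l * cnj (\<theta> l) = 1"
      using complex_norm_square[of "\<theta> l"] unimodular[OF that] by simp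
    moreover have "(\<Sum>l'\<in>L - {l}. c l * cnj (c l') * (\<Sum>r<M. (\<theta> l * cnj (\<theta> l'))^r)) = 0"
      using orthogonal that by (intro sum.neutral) auto
    ultimately show ?thesis
      using that \<open>finite L\<close> by (simp add: sum.remove[of L l])
  qed
  have "complex_of_real (\<Sum>r<M. (cmod (\<Sum>l\<in>L. c l * \<theta> l ^ r))^2)
      = (\<Sum>r<M. (\<Sum>l\<in>L. c l * \<theta> l ^ r) * cnj (\<Sum>l\<in>L. c l * \<theta> l ^ r))"
    by (simp only: of_real_sum complex_norm_square)
  also have "\<dots> = (\<Sum>r<M. \<Sum>l\<in>L. \<Sum>l'\<in>L. c l * cnj (c l') * (\<theta> l * cnj (\<theta> l'))^r)"
    by (simp add: sum_product cnj_sum power_mult_distrib mult_ac)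
  also have "\<dots> = (\<Sum>l\<in>L. \<Sum>l'\<in>L. c l * cnj (c l') * (\<Sum>r<M. (\<theta> l * cnj (\<theta> l'))^r))"
    by (simp add: sum_distrib_left sum.swap[of _ "{..<M}"])
  also have "\<dots> = (\<Sum>l\<in>L. M * (c l * cnj (c l)))"
    by (rule sum.cong[OF refl]) (rule diagonal)
  also have "\<dots> = complex_of_real (M * (\<Sum>l\<in>L. (cmod (c l))^2))"
    by (simp only: of_real_mult of_real_sum of_real_of_nat_eq complex_norm_square sum_distrib_left)
  finally show ?thesis
    using of_real_eq_iff by blast
qed

lemma cmod_sum_unimodular_sq_le:
  assumes "\<And>l. l \<in> L \<Longrightarrow> cmod (u l) = 1"
  shows "(cmod (\<Sum>l\<in>L. complex_of_real (a l) * u l * z l))^2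
    \<le> (\<Sum>l\<in>L. (a l)^2) * (\<Sum>l\<in>L. (cmod (z l))^2)"
proof -
  have "cmod (\<Sum>l\<in>L. complex_of_real (a l) * u l * z l) \<le> (\<Sum>l\<in>L. \<bar>a l\<bar> * cmod (z l))"
    using assms by (auto simp: norm_mult intro!: order.trans[OF norm_sum] sum_mono)
  then have "(cmod (\<Sum>l\<in>L. complex_of_real (a l) * u l * z l))^2
      \<le> (\<Sum>l\<in>L. \<bar>a l\<bar> * cmod (z l))^2"
    by (simp add: power_mono)
  also have "\<dots> \<le> (\<Sum>l\<in>L. (a l)^2) * (\<Sum>l\<in>L. (cmod (z l))^2)"
    using Cauchy_Schwarz_ineq_sum[of "\<lambda>l. \<bar>a l\<bar>" "\<lambda>l. cmod (z l)" L] by simp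
  finally show ?thesis .
qed

lemma cmod_sum_phases_sq_le_hnorm2:
  assumes "k \<le> N"
  shows "(cmod (\<Sum>l<k. complex_of_real (a l) * e2pi (x l) * cnj (e l)))^2 \<le> (\<Sum>l<k. (a l)^2) * hnorm2 N e"
proof -
  have "(cmod (\<Sum>l<k. complex_of_real (a l) * e2pi (x l) * cnj (e l)))^2
      \<le> (\<Sum>l<k. (a l)^2) * (\<Sum>l<k. (cmod (e l))^2)"
    using cmod_sum_unimodular_sq_le[of "{..<k}" "\<lambda>l. e2pi (x l)" a "\<lambda>l. cnj (e l)"] by simp
  also have "\<dots> \<le> (\<Sum>l<k. (a l)^2) * hnorm2 N e"
    using assms unfolding hnorm2_def by (intro mult_left_mono sum_mono2 sum_nonneg) auto
  finally show ?thesis .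
qed

lemma norm_add_sq_le:
  fixes x y :: "'a :: real_normed_vector"
  shows "(norm (x + y))^2 \<le> 2 * (norm x)^2 + 2 * (norm y)^2"
proof -
  have "(norm (x + y))^2 \<le> (norm x + norm y)^2"
    by (simp add: norm_triangle_ineq power_mono)
  also have "\<dots> \<le> 2 * (norm x)^2 + 2 * (norm y)^2"
    using zero_le_power2[of "norm x - norm y"] by (simp add: power2_eq_square algebra_simps)
  finally show ?thesis .
qed

lemma sum_inverse_squares_le:
  assumes "1 \<le> a"
  shows "(\<Sum>m=a..b. 1 / (real m)^2) \<le> 2 / real a"
proof (cases "a \<le> Suc b")
  case True
  have "(\<Sum>m=a..b. 1 / (real m)^2) \<le> (\<Sum>m=a..b. (- 2 / real (Suc m)) - (- 2 / real m))"
  proof (rule sum_mono)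
    fix m assume "m \<in> {a..b}"
    then have m: "real m \<ge> 1" using assms by simp
    then have "real m * (real m + 1) \<le> 2 * (real m)^2"
      using mult_right_mono[OF m, of "real m"] by (simp add: power2_eq_square algebra_simps)
    then have "2 / (2 * (real m)^2) \<le> 2 / (real m * (real m + 1))"
      using m by (intro divide_left_mono) auto
    also have "\<dots> = (- 2 / real (Suc m)) - (- 2 / real m)"
      using m by (simp add: field_simps)
    finally show "1 / (real m)^2 \<le> (- 2 / real (Suc m)) - (- 2 / real m)" by simp
  qed
  also have "\<dots> = 2 / real a - 2 / real (Suc b)"
    using sum_Suc_diff[OF True, of "\<lambda>m. - 2 / real m"] by simp
  also have "\<dots> \<le> 2 / real a"
    by simp
  finally show ?thesis .
qed simp

lemma harm_le_ln_plus_1: "harm n \<le> ln (real n) + (1 :: real)"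
proof (cases "n = 0")
  case False
  then show ?thesis
    using euler_mascheroni_sequence_decreasing[of 1 n] by (simp add: harm_expand)
qed (simp add: harm_expand)

lemma acoef_sq: "N \<ge> 1 \<Longrightarrow> (acoef N m)^2 = 1 / ((real m)^2 * ln (real N))"
  by (simp add: acoef_def power_mult_distrib power_divide)

lemma sum_acoef_sq_le:
  assumes "N \<ge> 1" "l < k"
  shows "(\<Sum>j=k..N. (acoef N (j - l))^2) \<le> 2 / (real (k - l) * ln (real N))"
proof -
  have "(\<Sum>j=k..N. (acoef N (j - l))^2) = (\<Sum>m=k-l..N-l. 1 / (real m)^2) / ln (real N)"
    using assms
    by (simp add: acoef_sq sum_divide_distrib,
        intro sum.reindex_bij_witness[of _ "\<lambda>m. m + l" "\<lambda>j. j - l"]) auto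
  also have "\<dots> \<le> (2 / real (k - l)) / ln (real N)"
    using assms by (intro divide_right_mono sum_inverse_squares_le) auto
  finally show ?thesis by simp
qed

lemma sum_coarse_acoef_sq_le:
  assumes "N \<ge> 2"
  shows "(\<Sum>j=k..N. \<Sum>l<k. (acoef N (j - l))^2) \<le> 2 * (ln (real N) + 1) / ln (real N)"
proof (cases "k \<le> N")
  case True
  have harm_k: "(\<Sum>l<k. 1 / real (k - l)) = harm k"
    unfolding harm_altdef sum.nat_diff_reindex[of "\<lambda>i. inverse (real (Suc i))" k, symmetric]
    by (intro sum.cong) (auto simp: Suc_diff_Suc divide_inverse)
  have "(\<Sum>j=k..N. \<Sum>l<k. (acoef N (j - l))^2) = (\<Sum>l<k. \<Sum>j=k..N. (acoef N (j - l))^2)"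
    by (rule sum.swap)
  also have "\<dots> \<le> (\<Sum>l<k. 2 / (real (k - l) * ln (real N)))"
    using assms by (intro sum_mono sum_acoef_sq_le) auto
  also have "\<dots> = 2 * harm k / ln (real N)"
    by (simp add: harm_k[symmetric] sum_distrib_left sum_divide_distrib)
  also have "\<dots> \<le> 2 * (ln (real N) + 1) / ln (real N)"
    using assms harm_mono[OF True, where 'a = real] harm_le_ln_plus_1[of N]
    by (intro divide_right_mono mult_left_mono) auto
  finally show ?thesis .
qed (use assms in simp)

lemma sum_fine_acoef_sq_le:
  assumes "N \<ge> 2"
  shows "(\<Sum>j=k..N. \<Sum>l=k..<j. (acoef N (j - l))^2 * (cmod (e l))^2) \<le> 2 * hnorm2 N e / ln (real N)"
proof -
  have later: "{j \<in> {k..N}. l < j} = {Suc l..N}" if "k \<le> l" for l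
    using that by auto
  have "(\<Sum>j=k..N. \<Sum>l=k..<j. (acoef N (j - l))^2 * (cmod (e l))^2)
      = (\<Sum>j=k..N. \<Sum>l\<in>{l \<in> {k..<N}. l < j}. (acoef N (j - l))^2 * (cmod (e l))^2)"
    by (intro sum.cong) auto
  also have "\<dots> = (\<Sum>l=k..<N. \<Sum>j\<in>{j \<in> {k..N}. l < j}. (acoef N (j - l))^2 * (cmod (e l))^2)"
    by (rule sum.swap_restrict) auto
  also have "\<dots> = (\<Sum>l=k..<N. (cmod (e l))^2 * (\<Sum>j=Suc l..N. (acoef N (j - l))^2))"
    by (intro sum.cong refl, subst later) (auto simp: sum_distrib_left mult.commute)
  also have "\<dots> \<le> (\<Sum>l=k..<N. (cmod (e l))^2 * (2 / ln (real N)))"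
  proof (intro sum_mono mult_left_mono)
    fix l
    show "(\<Sum>j=Suc l..N. (acoef N (j - l))^2) \<le> 2 / ln (real N)"
      using assms sum_acoef_sq_le[of N l "Suc l"] by simp
  qed simp
  also have "\<dots> \<le> (\<Sum>l<N. (cmod (e l))^2 * (2 / ln (real N)))"
    using assms by (intro sum_mono2) auto
  also have "\<dots> = 2 * hnorm2 N e / ln (real N)"
    unfolding hnorm2_def sum_distrib_right[symmetric] by simp
  finally show ?thesis .
qed

definition dyadic_desc :: "nat \<times> nat \<Rightarrow> nat \<Rightarrow> nat \<Rightarrow> nat \<times> nat" where
  "dyadic_desc K j r = (j, snd K * 2 ^ (j - fst K) + r)"

lemma inj_dyadic_desc: "inj (\<lambda>(j, r). dyadic_desc K j r)"
  by (auto intro!: injI simp: dyadic_desc_def)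

lemma fst_dyadic_desc [simp]: "fst (dyadic_desc K j r) = j"
  by (simp add: dyadic_desc_def)

lemma dlen_dyadic_desc [simp]: "dlen (dyadic_desc K j r) = (1/2) ^ j"
  by (simp add: dlen_def dyadic_desc_def)

lemma dyadic_sub_rank_le:
  assumes "dyadic K"
  shows "dyadic_sub K \<inter> {I. fst I \<le> N}
    = (\<lambda>(j, r). dyadic_desc K j r) ` (SIGMA j:{fst K..N}. {..<2 ^ (j - fst K)})"
proof (intro equalityI subsetI)
  fix I assume "I \<in> dyadic_sub K \<inter> {I. fst I \<le> N}"
  then obtain j n where I: "I = (j, n)" "fst K \<le> j" "j \<le> N" and "n div 2 ^ (j - fst K) = snd K"
    by (cases I) (auto simp: dyadic_sub_def)
  then have "I = dyadic_desc K j (n mod 2 ^ (j - fst K))"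
    by (simp add: dyadic_desc_def) (metis div_mult_mod_eq)
  with I show "I \<in> (\<lambda>(j, r). dyadic_desc K j r) ` (SIGMA j:{fst K..N}. {..<2 ^ (j - fst K)})"
    by force
next
  fix I assume "I \<in> (\<lambda>(j, r). dyadic_desc K j r) ` (SIGMA j:{fst K..N}. {..<2 ^ (j - fst K)})"
  then obtain j r where I: "I = dyadic_desc K j r" "fst K \<le> j" "j \<le> N" "r < 2 ^ (j - fst K)"
    by auto
  have "snd K * 2 ^ (j - fst K) + r < (snd K + 1) * 2 ^ (j - fst K)"
    using I by simp
  also have "\<dots> \<le> 2 ^ fst K * 2 ^ (j - fst K)"
    using assms by (intro mult_right_mono) (auto simp: dyadic_def)
  also have "\<dots> = 2 ^ j"
    using I by (simp flip: power_add)
  finally show "I \<in> dyadic_sub K \<inter> {I. fst I \<le> N}"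
    using I by (simp add: dyadic_sub_def dyadic_def dyadic_desc_def)
qed

lemma infsum_dyadic_sub:
  assumes "dyadic K" and vanish: "\<And>I. N < fst I \<Longrightarrow> f I = 0"
  shows "(\<Sum>\<^sub>\<infinity>I\<in>dyadic_sub K. f I)
    = (\<Sum>j=fst K..N. \<Sum>r<2 ^ (j - fst K). f (dyadic_desc K j r))"
proof -
  have "(\<Sum>\<^sub>\<infinity>I\<in>dyadic_sub K. f I)
      = (\<Sum>\<^sub>\<infinity>I\<in>dyadic_sub K \<inter> {I. fst I \<le> N}. f I)"
    using vanish by (intro infsum_cong_neutral) auto
  also have "\<dots> = sum f ((\<lambda>(j, r). dyadic_desc K j r) ` (SIGMA j:{fst K..N}. {..<2 ^ (j - fst K)}))"
    by (simp add: dyadic_sub_rank_le[OF assms(1)])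
  also have "\<dots> = (\<Sum>(j, r)\<in>(SIGMA j:{fst K..N}. {..<2 ^ (j - fst K)}). f (dyadic_desc K j r))"
    using sum.reindex[OF inj_on_subset[OF inj_dyadic_desc subset_UNIV], where g = f]
    by (simp add: case_prod_unfold comp_def)
  also have "\<dots> = (\<Sum>j=fst K..N. \<Sum>r<2 ^ (j - fst K). f (dyadic_desc K j r))"
    by (rule sum.Sigma[symmetric]) auto
  finally show ?thesis .
qed

lemma e2pi_dcenter_dyadic_desc:
  assumes "fst K \<le> l" "fst K \<le> j"
  shows "e2pi (2 ^ l * dcenter (dyadic_desc K j r))
    = e2pi (2 ^ l * dcenter (dyadic_desc K j 0)) * e2pi (2 ^ (l - fst K) / 2 ^ (j - fst K)) ^ r"
proof -
  have "(2::real) ^ l = 2 ^ (l - fst K) * 2 ^ fst K" "(2::real) ^ j = 2 ^ (j - fst K) * 2 ^ fst K"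
    using assms by (simp_all flip: power_add)
  then have "2 ^ l * dcenter (dyadic_desc K j r)
      = 2 ^ l * dcenter (dyadic_desc K j 0) + real r * (2 ^ (l - fst K) / 2 ^ (j - fst K))"
    by (simp add: dcenter_def dyadic_desc_def field_simps)
  then show ?thesis
    by (simp only: e2pi_add e2pi_of_nat_mult)
qed

lemma sum_dyadic_phases_orthogonal:
  assumes "k \<le> l" "l < j" "k \<le> l'" "l' < j" "l \<noteq> l'"
  shows "(\<Sum>r<2 ^ (j - k). (e2pi (2 ^ (l - k) / 2 ^ (j - k)) * cnj (e2pi (2 ^ (l' - k) / 2 ^ (j - k)))) ^ r) = 0"
proof -
  define d :: int where "d = 2 ^ (l - k) - 2 ^ (l' - k)"
  have "(2::int) ^ (l - k) \<noteq> 2 ^ (l' - k)"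
    using assms by (simp add: power_inject_exp)
  then have d0: "d \<noteq> 0"
    by (simp add: d_def)
  have d_bound: "\<bar>d\<bar> < int (2 ^ (j - k))"
  proof -
    have "(2::int) ^ (l - k) < 2 ^ (j - k)" "(2::int) ^ (l' - k) < 2 ^ (j - k)"
      using assms by (simp_all add: power_strict_increasing)
    moreover have "(0::int) < 2 ^ (l - k)" "(0::int) < 2 ^ (l' - k)"
      by simp_all
    ultimately show ?thesis
      unfolding d_def by (simp only: of_nat_power of_nat_numeral abs_less_iff) linarith
  qed
  have "2 ^ (l - k) / 2 ^ (j - k) - 2 ^ (l' - k) / 2 ^ (j - k) = real_of_int d / real (2 ^ (j - k))"
    by (simp add: d_def diff_divide_distrib)
  then show ?thesis
    unfolding e2pi_mult_cnj by (simp only: sum_e2pi_powers_eq_0[OF d0 d_bound])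
qed

lemma hinner_omega:
  assumes "1 \<le> fst I" "fst I \<le> N"
  shows "hinner N (omega N I) e
    = (\<Sum>l<fst I. complex_of_real (acoef N (fst I - l)) * e2pi (2 ^ l * dcenter I) * cnj (e l))"
proof -
  have "hinner N (omega N I) e
      = (\<Sum>l<N. if l < fst I
                 then complex_of_real (acoef N (fst I - l)) * e2pi (2 ^ l * dcenter I) * cnj (e l)
                 else 0)"
    unfolding hinner_def omega_def using assms by (intro sum.cong) auto
  also have "\<dots> = (\<Sum>l<fst I. complex_of_real (acoef N (fst I - l)) * e2pi (2 ^ l * dcenter I) * cnj (e l))"
    using assms by (intro sum.mono_neutral_cong_right) auto
  finally show ?thesis .
qed

lemma hinner_omega_eq_0: "fst I = 0 \<or> N < fst I \<Longrightarrow> hinner N (omega N I) e = 0"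
  by (auto simp: hinner_def omega_def)

lemma sum_cmod_sq_dyadic_phases:
  assumes "fst K \<le> j"
  shows "(\<Sum>r<2 ^ (j - fst K).
      (cmod (\<Sum>l=fst K..<j. complex_of_real (a l) * e2pi (2 ^ l * dcenter (dyadic_desc K j r)) * z l))^2)
    = 2 ^ (j - fst K) * (\<Sum>l=fst K..<j. (a l)^2 * (cmod (z l))^2)"
proof -
  define c where "c l = complex_of_real (a l) * e2pi (2 ^ l * dcenter (dyadic_desc K j 0)) * z l" for l
  define \<theta> where "\<theta> l = e2pi (2 ^ (l - fst K) / 2 ^ (j - fst K))" for l
  have "(\<Sum>l=fst K..<j. complex_of_real (a l) * e2pi (2 ^ l * dcenter (dyadic_desc K j r)) * z l)
      = (\<Sum>l=fst K..<j. c l * \<theta> l ^ r)" for r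
  proof (rule sum.cong[OF refl])
    fix l assume "l \<in> {fst K..<j}"
    then have "e2pi (2 ^ l * dcenter (dyadic_desc K j r))
        = e2pi (2 ^ l * dcenter (dyadic_desc K j 0)) * \<theta> l ^ r"
      unfolding \<theta>_def using assms by (intro e2pi_dcenter_dyadic_desc) auto
    then show "complex_of_real (a l) * e2pi (2 ^ l * dcenter (dyadic_desc K j r)) * z l = c l * \<theta> l ^ r"
      by (simp only: c_def mult_ac)
  qed
  then have "(\<Sum>r<2 ^ (j - fst K).
      (cmod (\<Sum>l=fst K..<j. complex_of_real (a l) * e2pi (2 ^ l * dcenter (dyadic_desc K j r)) * z l))^2)
      = (\<Sum>r<2 ^ (j - fst K). (cmod (\<Sum>l=fst K..<j. c l * \<theta> l ^ r))^2)"
    by simp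
  also have "\<dots> = real (2 ^ (j - fst K)) * (\<Sum>l=fst K..<j. (cmod (c l))^2)"
  proof (rule sum_cmod_sq_orthogonal_powers)
    show "cmod (\<theta> l) = 1" for l
      by (simp add: \<theta>_def)
    show "(\<Sum>r<2 ^ (j - fst K). (\<theta> l * cnj (\<theta> l')) ^ r) = 0"
      if "l \<in> {fst K..<j}" "l' \<in> {fst K..<j}" "l \<noteq> l'" for l l'
      unfolding \<theta>_def using that by (intro sum_dyadic_phases_orthogonal) auto
  qed simp
  also have "(\<Sum>l=fst K..<j. (cmod (c l))^2) = (\<Sum>l=fst K..<j. (a l)^2 * (cmod (z l))^2)"
    by (simp add: c_def norm_mult power_mult_distrib)
  finally show ?thesis by simp
qed

lemma sum_rank_energy_le:
  assumes "fst K \<le> j" "j \<le> N"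
  shows "(\<Sum>r<2 ^ (j - fst K). (cmod (hinner N (omega N (dyadic_desc K j r)) e))^2 * dlen (dyadic_desc K j r))
    \<le> 2 * dlen K * ((\<Sum>l<fst K. (acoef N (j - l))^2) * hnorm2 N e
                     + (\<Sum>l=fst K..<j. (acoef N (j - l))^2 * (cmod (e l))^2))"
proof (cases "j = 0")
  case True
  with assms show ?thesis
    by (simp add: hinner_omega_eq_0)
next
  case False
  define k where "k = fst K"
  define contrib where
    "contrib l r = complex_of_real (acoef N (j - l)) * e2pi (2 ^ l * dcenter (dyadic_desc K j r)) * cnj (e l)"
    for l r
  define A where "A = (\<Sum>l<k. (acoef N (j - l))^2)"
  define B where "B = (\<Sum>l=k..<j. (acoef N (j - l))^2 * (cmod (e l))^2)"
  have split:
      "hinner N (omega N (dyadic_desc K j r)) e = (\<Sum>l<k. contrib l r) + (\<Sum>l=k..<j. contrib l r)" for r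
  proof -
    have "{..<j} = {..<k} \<union> {k..<j}"
      using assms by (auto simp: k_def)
    then show ?thesis
      using False assms unfolding contrib_def
      by (simp add: hinner_omega sum.union_disjoint[of "{..<k}" "{k..<j}"] ivl_disj_int)
  qed
  have coarse: "(cmod (\<Sum>l<k. contrib l r))^2 \<le> A * hnorm2 N e" for r
    unfolding contrib_def A_def using assms by (intro cmod_sum_phases_sq_le_hnorm2) (simp add: k_def)
  have fine: "(\<Sum>r<2 ^ (j - k). (cmod (\<Sum>l=k..<j. contrib l r))^2) = 2 ^ (j - k) * B"
    using sum_cmod_sq_dyadic_phases[OF assms(1)] by (simp add: contrib_def B_def k_def)
  have "(\<Sum>r<2 ^ (j - k). (cmod (hinner N (omega N (dyadic_desc K j r)) e))^2 * dlen (dyadic_desc K j r))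
      = (\<Sum>r<2 ^ (j - k). (cmod ((\<Sum>l<k. contrib l r) + (\<Sum>l=k..<j. contrib l r)))^2) * (1/2) ^ j"
    by (simp add: split sum_distrib_right)
  also have "\<dots> \<le> (\<Sum>r<2 ^ (j - k). 2 * (A * hnorm2 N e) + 2 * (cmod (\<Sum>l=k..<j. contrib l r))^2)
                  * (1/2) ^ j"
    by (intro mult_right_mono sum_mono order.trans[OF norm_add_sq_le] add_right_mono mult_left_mono coarse) auto
  also have "\<dots> = 2 * (2 ^ (j - k) * (1/2) ^ j) * (A * hnorm2 N e + B)"
    by (simp add: sum.distrib fine algebra_simps flip: sum_distrib_left)
  also have "2 ^ (j - k) * (1/2) ^ j = dlen K"
    using assms by (simp add: dlen_def k_def power_diff power_one_over field_simps)
  finally show ?thesis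
    by (simp add: A_def B_def k_def)
qed

theorem lemma7:
  shows "\<exists>C>0. \<forall>N::nat. N \<ge> 2 \<longrightarrow> (\<forall>K. dyadic K \<longrightarrow> (\<forall>e :: nat \<Rightarrow> complex.
     (\<Sum>\<^sub>\<infinity>I\<in>dyadic_sub K. (cmod (hinner N (omega N I) e))^2 * dlen I)
       \<le> C * dlen K * hnorm2 N e))"
proof (intro exI[of _ 16] conjI allI impI)
  fix N :: nat and K :: "nat \<times> nat" and e :: "nat \<Rightarrow> complex"
  assume "N \<ge> 2" and "dyadic K"
  define k L where "k = fst K" and "L = ln (real N)"
  define A where "A j = (\<Sum>l<k. (acoef N (j - l))^2)" for j
  define B where "B j = (\<Sum>l=k..<j. (acoef N (j - l))^2 * (cmod (e l))^2)" for j
  have "ln 2 \<le> L"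
    using \<open>N \<ge> 2\<close> by (simp add: L_def)
  then have "L \<ge> 2/3"
    using ln2_ge_two_thirds by linarith
  have "(\<Sum>\<^sub>\<infinity>I\<in>dyadic_sub K. (cmod (hinner N (omega N I) e))^2 * dlen I)
      = (\<Sum>j=k..N. \<Sum>r<2 ^ (j - k).
           (cmod (hinner N (omega N (dyadic_desc K j r)) e))^2 * dlen (dyadic_desc K j r))"
    unfolding k_def by (rule infsum_dyadic_sub[OF \<open>dyadic K\<close>]) (simp add: hinner_omega_eq_0)
  also have "\<dots> \<le> (\<Sum>j=k..N. 2 * dlen K * (A j * hnorm2 N e + B j))"
    unfolding A_def B_def k_def by (intro sum_mono sum_rank_energy_le) auto
  also have "\<dots> = 2 * dlen K * ((\<Sum>j=k..N. A j) * hnorm2 N e + (\<Sum>j=k..N. B j))"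
    by (simp only: sum.distrib flip: sum_distrib_left sum_distrib_right)
  also have "\<dots> \<le> 2 * dlen K * (2 * (L + 1) / L * hnorm2 N e + 2 * hnorm2 N e / L)"
    using \<open>N \<ge> 2\<close> sum_coarse_acoef_sq_le sum_fine_acoef_sq_le
    by (intro mult_left_mono add_mono mult_right_mono) (auto simp: A_def B_def L_def hnorm2_def dlen_def sum_nonneg)
  also have "\<dots> = 2 * dlen K * (2 + 4 / L) * hnorm2 N e"
    using \<open>L \<ge> 2/3\<close> by (simp add: field_simps)
  also have "\<dots> \<le> 16 * dlen K * hnorm2 N e"
    using \<open>L \<ge> 2/3\<close> by (intro mult_right_mono) (auto simp: dlen_def hnorm2_def sum_nonneg divide_le_eq)
  finally show "(\<Sum>\<^sub>\<infinity>I\<in>dyadic_sub K. (cmod (hinner N (omega N I) e))^2 * dlen I)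
      \<le> 16 * dlen K * hnorm2 N e" .
qed simp

end
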